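(* Let $\mathcal{B}:\mathbb{R}[x_1,x_2]_{2d}\to\mathbb{R}^m$ be a linear map and $b\in\mathbb{R}^m$, and suppose there exists $p\in\Sigma[x_1,x_2]_{2d}$ with $\mathcal{B}(p)=b$. Define $f_{\mathcal{B}}(\mathbf{u})=\|\mathcal{B}(u_1^2+u_2^2)-b\|^2$ for $\mathbf{u}=(u_1,u_2)\in\mathbb{R}[x_1,x_2]_d^2$. If $\nabla f_{\mathcal{B}}(\mathbf{u})=0$ and $\nabla^2 f_{\mathcal{B}}(\mathbf{u})\succeq0$, then $f_{\mathcal{B}}(\mathbf{u})=0$.
   Context: $\mathbb{R}[x_1,x_2]_n$ denotes the space of real binary forms (homogeneous polynomials in $x_1,x_2$) of degree $n$, and $\Sigma[x_1,x_2]_{2d}$ the cone of sums of squares of binary forms of degree $d$. $\|\cdot\|$ is the norm induced by an inner product on $\mathbb{R}^m$ (e.g. the Euclidean one). Derivatives are taken with respect to the finite-dimensional real vector space $\mathbb{R}[x_1,x_2]_d^2$: $\nabla f_{\mathcal{B}}(\mathbf{u})=0$ means all first directional derivatives vanish, and $\nabla^2 f_{\mathcal{B}}(\mathbf{u})\succeq0$ means all second directional derivatives are nonnegative. *)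

theory Defs
  imports "HOL-Analysis.Analysis" "HOL-Computational_Algebra.Polynomial"
begin

text \<open>A real binary form of degree n, sum over i of c_i x1^i x2^(n-i), is represented by
  the univariate polynomial sum of c_i t^i (of degree at most n).  This identification is
  a linear bijection that is compatible with products (the product of forms of degrees
  n and k corresponds to the product of the polynomials).\<close>

definition binary_forms :: "nat \<Rightarrow> real poly set" where
  "binary_forms n = {p. degree p \<le> n}"

definition form_eval :: "nat \<Rightarrow> real poly \<Rightarrow> real \<Rightarrow> real \<Rightarrow> real" where
  "form_eval n p x1 x2 = (\<Sum>i\<le>n. coeff p i * x1 ^ i * x2 ^ (n - i))"

definition sos_forms :: "nat \<Rightarrow> real poly set" where
  "sos_forms d = {p. \<exists>qs. set qs \<subseteq> binary_forms d \<and> p = sum_list (map (\<lambda>q. q ^ 2) qs)}"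

definition linear_on_forms :: "nat \<Rightarrow> (real poly \<Rightarrow> 'a::real_vector) \<Rightarrow> bool" where
  "linear_on_forms n B \<longleftrightarrow>
     (\<forall>p\<in>binary_forms n. \<forall>q\<in>binary_forms n. B (p + q) = B p + B q) \<and>
     (\<forall>c. \<forall>p\<in>binary_forms n. B (smult c p) = c *\<^sub>R B p)"

definition f_B :: "(real poly \<Rightarrow> 'a::real_normed_vector) \<Rightarrow> 'a \<Rightarrow> real poly \<times> real poly \<Rightarrow> real" where
  "f_B B b u = (norm (B (fst u ^ 2 + snd u ^ 2) - b)) ^ 2"

definition line_pt :: "real poly \<times> real poly \<Rightarrow> real poly \<times> real poly \<Rightarrow> real \<Rightarrow> real poly \<times> real poly" where
  "line_pt u v t = (fst u + smult t (fst v), snd u + smult t (snd v))"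

end

theory Submission
  imports Defs "HOL-Computational_Algebra.Polynomial_Factorial" "HOL-Computational_Algebra.Field_as_Ring"
begin

(* Put r = B(u1^2 + u2^2) - b and L p = <r, B p>.  Along a line u + t v, f_B is the quartic
   |r + 2t B(u1 v1 + u2 v2) + t^2 B(v1^2 + v2^2)|^2 in t, so a vanishing gradient and a psd
   Hessian say that L kills u1 v1 + u2 v2, that L(n1^2 + n2^2) >= 0 for every syzygy
   u1 n1 + u2 n2 = 0, and, perturbing n1 by x w, that L(n1 w) = L(n2 w) = 0 when equality holds.
   For binary forms these conditions force L(s^2) >= 0 for all forms s of degree d.  After a
   change of coordinates u1 has full degree; write (u1, u2) = g (a, b) with a, b coprime.  On
   forms of degree 2d, L p = L (p mod g); the syzygies (b h, -a h) give L(h^2 m) >= 0 for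
   m = a^2 + b^2; and a descent in the annihilator of L yields an element y coprime to m.
   Inverting m modulo y turns s^2 into s^2 (mu m)^2, a sum of two terms of the form h^2 m.
   Hence L(p) >= 0 for the sum of squares p with B p = b, and |r|^2 = L(u1^2 + u2^2) - L(p) <= 0. *)

section \<open>Degrees, binary forms and coordinate changes\<close>

lemma degree_mult_le_add: "degree p \<le> n \<Longrightarrow> degree q \<le> m \<Longrightarrow> degree (p * q) \<le> n + m"
  using degree_mult_le[of p q] by linarith

lemma degree_square_le: "degree p \<le> d \<Longrightarrow> degree (p\<^sup>2) \<le> 2 * d"
  unfolding power2_eq_square mult_2 by (rule degree_mult_le_add)

lemma degree_sum_squares_le:
  "degree p \<le> d \<Longrightarrow> degree q \<le> d \<Longrightarrow> degree (p\<^sup>2 + q\<^sup>2) \<le> 2 * d"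
  by (intro degree_add_le degree_square_le)

lemma sos_forms_subset_binary_forms: "sos_forms d \<subseteq> binary_forms (2 * d)"
proof
  fix p
  assume "p \<in> sos_forms d"
  then obtain qs where "set qs \<subseteq> binary_forms d" "p = sum_list (map (\<lambda>q. q\<^sup>2) qs)"
    by (auto simp: sos_forms_def)
  then show "p \<in> binary_forms (2 * d)"
    by (induction qs arbitrary: p) (auto simp: binary_forms_def intro!: degree_add_le degree_square_le)
qed

text \<open>In the encoding of forms of degree \<open>n\<close> used here, \<open>form_swap n\<close> exchanges \<open>x\<^sub>1\<close> and
  \<open>x\<^sub>2\<close>, and \<open>p \<circ>\<^sub>p [:c, 1:]\<close> is the substitution \<open>x\<^sub>1 \<mapsto> x\<^sub>1 + c x\<^sub>2\<close>.\<close>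

definition form_swap :: "nat \<Rightarrow> 'a::comm_semiring_1 poly \<Rightarrow> 'a poly" where
  "form_swap n p = (\<Sum>i\<le>n. monom (coeff p i) (n - i))"

lemma coeff_form_swap: "coeff (form_swap n p) j = (if j \<le> n then coeff p (n - j) else 0)"
proof -
  have "coeff (form_swap n p) j = (\<Sum>i\<le>n. if i = n - j \<and> j \<le> n then coeff p i else 0)"
    unfolding form_swap_def coeff_sum coeff_monom by (rule sum.cong) auto
  then show ?thesis
    by (simp add: sum.delta)
qed

lemma degree_form_swap_le: "degree (form_swap n p) \<le> n"
  by (rule degree_le) (simp add: coeff_form_swap)

lemma form_swap_form_swap: "degree p \<le> n \<Longrightarrow> form_swap n (form_swap n p) = p"
  by (rule poly_eqI) (auto simp: coeff_form_swap coeff_eq_0)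

lemma form_swap_add: "form_swap n (p + q) = form_swap n p + form_swap n q"
  by (rule poly_eqI) (simp add: coeff_form_swap)

lemma form_swap_eq_reflect_poly:
  "degree p \<le> n \<Longrightarrow> form_swap n p = monom 1 (n - degree p) * reflect_poly p"
  by (rule poly_eqI) (auto simp: coeff_form_swap coeff_monom_mult coeff_reflect_poly coeff_eq_0)

lemma form_swap_mult:
  fixes p q :: "'a::idom poly"
  assumes "degree p \<le> n" "degree q \<le> m"
  shows "form_swap (n + m) (p * q) = form_swap n p * form_swap m q"
proof (cases "p = 0 \<or> q = 0")
  case True
  then show ?thesis
    by (auto simp: form_swap_def)
next
  case False
  then have "degree (p * q) = degree p + degree q"
    by (simp add: degree_mult_eq)
  with assms show ?thesis
    by (simp add: form_swap_eq_reflect_poly reflect_poly_mult mult_monom algebra_simps)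
qed

lemma form_swap_square:
  fixes q :: "'a::idom poly"
  assumes "degree q \<le> d"
  shows "form_swap (2 * d) ((form_swap d q)\<^sup>2) = q\<^sup>2"
proof -
  have "(form_swap d q)\<^sup>2 = form_swap (2 * d) (q\<^sup>2)"
    using assms by (simp add: power2_eq_square mult_2 form_swap_mult)
  with assms show ?thesis
    by (simp add: form_swap_form_swap degree_square_le)
qed

lemma pcompose_shift_shift: "p \<circ>\<^sub>p [:c, 1:] \<circ>\<^sub>p [:- c, 1:] = (p :: 'a::comm_ring_1 poly)"
  by (simp add: pcompose_assoc[symmetric] pcompose_pCons)

section \<open>The objective along a line\<close>

definition extend_form_map :: "nat \<Rightarrow> (real poly \<Rightarrow> 'a) \<Rightarrow> real poly \<Rightarrow> 'a" where
  "extend_form_map n B p = B (poly_cutoff (Suc n) p)"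

lemma extend_form_map_eq: "degree p \<le> n \<Longrightarrow> extend_form_map n B p = B p"
proof -
  assume "degree p \<le> n"
  then have "poly_cutoff (Suc n) p = p"
    by (intro poly_eqI) (simp add: coeff_poly_cutoff coeff_eq_0)
  then show ?thesis
    by (simp add: extend_form_map_def)
qed

lemma
  assumes "linear_on_forms n B"
  shows extend_form_map_add: "extend_form_map n B (p + q) = extend_form_map n B p + extend_form_map n B q"
    and extend_form_map_smult: "extend_form_map n B (smult c p) = c *\<^sub>R extend_form_map n B p"
proof -
  have "poly_cutoff (Suc n) (p + q) = poly_cutoff (Suc n) p + poly_cutoff (Suc n) q"
    "poly_cutoff (Suc n) (smult c p) = smult c (poly_cutoff (Suc n) p)"
    by (simp_all add: poly_eq_iff coeff_poly_cutoff)
  moreover have "poly_cutoff (Suc n) r \<in> binary_forms n" for r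
    unfolding binary_forms_def by (auto intro: degree_le simp: coeff_poly_cutoff)
  ultimately show "extend_form_map n B (p + q) = extend_form_map n B p + extend_form_map n B q"
    and "extend_form_map n B (smult c p) = c *\<^sub>R extend_form_map n B p"
    using assms by (simp_all add: linear_on_forms_def extend_form_map_def)
qed

lemma square_add_smult:
  "(p + smult x w)\<^sup>2 = p\<^sup>2 + smult x (p * w + p * w) + smult (x\<^sup>2) (w\<^sup>2 :: 'a::comm_ring_1 poly)"
  by (simp add: power2_eq_square algebra_simps smult_add_right)

lemma f_B_line_pt:
  assumes "linear_on_forms (2 * d) B"
    and deg: "degree u1 \<le> d" "degree u2 \<le> d" "degree v1 \<le> d" "degree v2 \<le> d"
  shows "f_B B b (line_pt (u1, u2) (v1, v2) t) = (norm (B (u1\<^sup>2 + u2\<^sup>2) - b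
    + t *\<^sub>R (2 *\<^sub>R B (u1 * v1 + u2 * v2)) + t\<^sup>2 *\<^sub>R B (v1\<^sup>2 + v2\<^sup>2)))\<^sup>2"
proof -
  define C where "C = extend_form_map (2 * d) B"
  have C_eq: "degree p \<le> 2 * d \<Longrightarrow> C p = B p" for p
    by (simp add: C_def extend_form_map_eq)
  have C_add: "C (p + q) = C p + C q" and C_smult: "C (smult c p) = c *\<^sub>R C p" for p q c
    using assms(1) by (simp_all add: C_def extend_form_map_add extend_form_map_smult)
  have "degree (u1 + smult t v1) \<le> d" "degree (u2 + smult t v2) \<le> d"
    using deg by (simp_all add: degree_add_le order.trans[OF degree_smult_le])
  then have "B ((u1 + smult t v1)\<^sup>2 + (u2 + smult t v2)\<^sup>2) = C ((u1 + smult t v1)\<^sup>2 + (u2 + smult t v2)\<^sup>2)"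
    by (simp add: C_eq degree_sum_squares_le)
  also have "\<dots> = C (u1\<^sup>2 + u2\<^sup>2) + t *\<^sub>R (2 *\<^sub>R C (u1 * v1 + u2 * v2)) + t\<^sup>2 *\<^sub>R C (v1\<^sup>2 + v2\<^sup>2)"
    unfolding scaleR_2 by (simp only: square_add_smult C_add C_smult scaleR_add_right add_ac)
  also have "\<dots> = B (u1\<^sup>2 + u2\<^sup>2) + t *\<^sub>R (2 *\<^sub>R B (u1 * v1 + u2 * v2)) + t\<^sup>2 *\<^sub>R B (v1\<^sup>2 + v2\<^sup>2)"
  proof -
    have "degree (u1 * v1 + u2 * v2) \<le> 2 * d"
      using deg unfolding mult_2 by (intro degree_add_le degree_mult_le_add)
    then show ?thesis
      using deg by (simp add: C_eq degree_sum_squares_le)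
  qed
  finally show ?thesis
    by (simp add: f_B_def line_pt_def algebra_simps)
qed

lemma norm_quadratic_curve_eq_poly:
  fixes r x y :: "'a::real_inner"
  shows "(norm (r + t *\<^sub>R x + t\<^sup>2 *\<^sub>R y))\<^sup>2
    = poly [:r \<bullet> r, 2 * (r \<bullet> x), x \<bullet> x + 2 * (r \<bullet> y), 2 * (x \<bullet> y), y \<bullet> y:] t"
proof -
  have "(norm (r + t *\<^sub>R x + t\<^sup>2 *\<^sub>R y))\<^sup>2 = (r + t *\<^sub>R x + t\<^sup>2 *\<^sub>R y) \<bullet> (r + t *\<^sub>R x + t\<^sup>2 *\<^sub>R y)"
    by (rule power2_norm_eq_inner)
  also have "\<dots> = r \<bullet> r + 2 * t * (r \<bullet> x) + t\<^sup>2 * (x \<bullet> x + 2 * (r \<bullet> y))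
      + 2 * t ^ 3 * (x \<bullet> y) + t ^ 4 * (y \<bullet> y)"
    by (simp add: inner_add_left inner_add_right inner_commute)
      (simp add: power2_eq_square power3_eq_cube power4_eq_xxxx algebra_simps)
  finally show ?thesis
    by (simp add: power2_eq_square power3_eq_cube power4_eq_xxxx algebra_simps)
qed

lemma quadratic_curve_critical_conditions:
  fixes r x y :: "'a::real_inner"
  assumes "((\<lambda>t. (norm (r + t *\<^sub>R x + t\<^sup>2 *\<^sub>R y))\<^sup>2) has_real_derivative 0) (at 0)"
    and "0 \<le> deriv (deriv (\<lambda>t. (norm (r + t *\<^sub>R x + t\<^sup>2 *\<^sub>R y))\<^sup>2)) 0"
  shows "r \<bullet> x = 0" and "0 \<le> x \<bullet> x + 2 * (r \<bullet> y)"
proof -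
  define P where "P = [:r \<bullet> r, 2 * (r \<bullet> x), x \<bullet> x + 2 * (r \<bullet> y), 2 * (x \<bullet> y), y \<bullet> y:]"
  have curve: "(\<lambda>t. (norm (r + t *\<^sub>R x + t\<^sup>2 *\<^sub>R y))\<^sup>2) = poly P"
    unfolding P_def by (rule ext, rule norm_quadratic_curve_eq_poly)
  have deriv_poly: "deriv (poly q) = poly (pderiv q)" for q :: "real poly"
    by (simp add: fun_eq_iff DERIV_imp_deriv poly_DERIV)
  have "poly (pderiv P) 0 = 0"
    using DERIV_unique[OF poly_DERIV[of P 0]] assms(1) unfolding curve by simp
  then show "r \<bullet> x = 0"
    by (simp add: P_def pderiv_pCons)
  have "0 \<le> poly (pderiv (pderiv P)) 0"
    using assms(2) unfolding curve by (simp add: deriv_poly)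
  then show "0 \<le> x \<bullet> x + 2 * (r \<bullet> y)"
    by (simp add: P_def pderiv_pCons)
qed

lemma linear_coeff_zero_if_nonneg_quadratic:
  fixes a c :: real
  assumes "\<And>x. 0 \<le> a * x\<^sup>2 + c * x"
  shows "c = 0"
proof (rule DERIV_local_min[where d = 1])
  show "((\<lambda>x. a * x\<^sup>2 + c * x) has_real_derivative c) (at 0)"
    by (auto intro!: derivative_eq_intros)
qed (use assms in auto)

lemma inner_vanishes_if_perturbation_nonneg:
  fixes C :: "real poly \<Rightarrow> 'a::real_inner"
  assumes add: "\<And>p q. C (p + q) = C p + C q" and smult: "\<And>c p. C (smult c p) = c *\<^sub>R C p"
    and nonneg: "\<And>x. 0 \<le> 2 * (C (smult x e) \<bullet> C (smult x e)) + r \<bullet> C ((n + smult x w)\<^sup>2 + m\<^sup>2)"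
    and null: "r \<bullet> C (n\<^sup>2 + m\<^sup>2) = 0"
  shows "r \<bullet> C (n * w) = 0"
proof -
  have "C ((n + smult x w)\<^sup>2 + m\<^sup>2) = C (n\<^sup>2 + m\<^sup>2) + x *\<^sub>R (C (n * w) + C (n * w)) + x\<^sup>2 *\<^sub>R C (w\<^sup>2)" for x
    by (simp only: square_add_smult add smult add_ac)
  then have "0 \<le> (2 * (C e \<bullet> C e) + r \<bullet> C (w\<^sup>2)) * x\<^sup>2 + (2 * (r \<bullet> C (n * w))) * x" for x
    using nonneg[of x] null by (simp add: smult inner_add_right power2_eq_square algebra_simps)
  then show ?thesis
    using linear_coeff_zero_if_nonneg_quadratic by fastforce
qed

section \<open>Polynomial algebra\<close>

lemma coprime_combination_degree_le:
  fixes a b P :: "'a::field_gcd poly"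
  assumes "coprime a b" "a \<noteq> 0" "degree b \<le> degree a" "degree a \<le> d"
    and "degree P \<le> d + degree a"
  shows "\<exists>X Y. degree X \<le> d \<and> degree Y \<le> d \<and> P = a * X + b * Y"
proof -
  have "gcd a b = 1"
    using \<open>coprime a b\<close> by (simp add: coprime_imp_gcd_eq_1)
  then obtain x y where xy: "x * a + y * b = 1"
    using bezout_coefficients_fst_snd[of a b] by metis
  define Y where "Y = (y * P) mod a"
  define X where "X = x * P + ((y * P) div a) * b"
  have "P = a * (x * P) + b * (y * P)"
    using arg_cong[where f = "\<lambda>t. P * t", OF xy] by (simp add: algebra_simps)
  also have "y * P = ((y * P) div a) * a + Y"
    unfolding Y_def by simp
  finally have P: "P = a * X + b * Y"
    unfolding X_def by (simp add: algebra_simps)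
  have "degree Y < degree a \<or> Y = 0"
    using degree_mod_less[OF \<open>a \<noteq> 0\<close>, of "y * P"] unfolding Y_def by auto
  then have Y: "degree Y \<le> d" and bY: "degree (b * Y) \<le> d + degree a"
    using degree_mult_le[of b Y] assms(3,4) by auto
  have "a * X = P - b * Y"
    using P by simp
  then have "degree (a * X) \<le> d + degree a"
    using degree_diff_le[OF assms(5) bY] by simp
  then have "degree X \<le> d"
    using \<open>a \<noteq> 0\<close> by (cases "X = 0") (simp_all add: degree_mult_eq)
  with Y P show ?thesis
    by blast
qed

lemma exists_coprime_in_saturated_ideal:
  fixes m :: "'a::field_gcd poly" and R :: "'a poly set"
  assumes ideal: "\<And>h z. h \<in> R \<Longrightarrow> h * z \<in> R"
    and saturated: "\<And>y. m * y \<in> R \<Longrightarrow> y \<in> R"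
    and "y \<in> R" "y \<noteq> 0"
  shows "\<exists>y'\<in>R. y' \<noteq> 0 \<and> coprime y' m"
  using assms(3,4)
proof (induction "degree y" arbitrary: y rule: less_induct)
  case less
  show ?case
  proof (cases "coprime y m")
    case True
    with less.prems show ?thesis
      by blast
  next
    case False
    define c where "c = gcd y m"
    have "c \<noteq> 0"
      using less.prems by (simp add: c_def)
    have "\<not> is_unit c"
      using False unfolding c_def by (metis is_unit_gcd)
    then have "degree c > 0"
      using is_unit_iff_degree[OF \<open>c \<noteq> 0\<close>] by simp
    obtain y1 where y: "y = c * y1"
      unfolding c_def by (rule dvdE[OF gcd_dvd1])
    obtain m1 where m: "m = c * m1"
      unfolding c_def by (rule dvdE[OF gcd_dvd2])
    have "y1 \<noteq> 0"
      using y less.prems by auto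
    then have "degree y1 < degree y"
      using y \<open>c \<noteq> 0\<close> \<open>degree c > 0\<close> by (simp add: degree_mult_eq)
    moreover have "m * y1 = y * m1"
      using y m by (simp add: ac_simps)
    then have "m * y1 \<in> R"
      using ideal[OF less.prems(1)] by simp
    then have "y1 \<in> R"
      by (rule saturated)
    ultimately show ?thesis
      using less.hyps \<open>y1 \<noteq> 0\<close> by blast
  qed
qed

lemma nonneg_squares_if_nonneg_weighted_squares:
  fixes \<Lambda> :: "'a::field_gcd poly \<Rightarrow> real" and a b g :: "'a poly"
  assumes additive: "\<And>p q. \<Lambda> (p + q) = \<Lambda> p + \<Lambda> q"
    and nonneg: "\<And>h. 0 \<le> \<Lambda> (h\<^sup>2 * (a\<^sup>2 + b\<^sup>2))"
    and null: "\<And>h z. \<Lambda> (h\<^sup>2 * (a\<^sup>2 + b\<^sup>2)) = 0 \<Longrightarrow> \<Lambda> (h * z) = 0"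
    and "g \<noteq> 0" "\<And>z. \<Lambda> (g * z) = 0"
  shows "0 \<le> \<Lambda> (s\<^sup>2)"
proof -
  define m where "m = a\<^sup>2 + b\<^sup>2"
  define R where "R = {h. \<forall>z. \<Lambda> (h * z) = 0}"
  have "\<exists>y\<in>R. y \<noteq> 0 \<and> coprime y m"
  proof (rule exists_coprime_in_saturated_ideal)
    show "h * z \<in> R" if "h \<in> R" for h z
      using that by (simp add: R_def mult.assoc)
    show "y \<in> R" if "m * y \<in> R" for y
      using that null[of y] by (simp add: R_def m_def power2_eq_square ac_simps)
  qed (use assms(4,5) in \<open>auto simp: R_def\<close>)
  then obtain y where "y \<in> R" "coprime m y"
    by (auto simp: coprime_commute)
  then obtain \<mu> \<nu> where \<mu>\<nu>: "\<mu> * m + \<nu> * y = 1"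
    using bezout_coefficients_fst_snd[of m y] by (metis coprime_imp_gcd_eq_1)
  have mod_y: "\<Lambda> z = \<Lambda> (z * (\<mu> * m))" for z
  proof -
    have "z = z * (\<mu> * m) + y * (z * \<nu>)"
      using arg_cong[where f = "\<lambda>t. z * t", OF \<mu>\<nu>] by (simp add: algebra_simps)
    then have "\<Lambda> z = \<Lambda> (z * (\<mu> * m)) + \<Lambda> (y * (z * \<nu>))"
      by (metis additive)
    with \<open>y \<in> R\<close> show ?thesis
      by (simp add: R_def)
  qed
  have "\<Lambda> (s\<^sup>2) = \<Lambda> (s\<^sup>2 * (\<mu> * m) * (\<mu> * m))"
    using mod_y[of "s\<^sup>2"] mod_y[of "s\<^sup>2 * (\<mu> * m)"] by simp
  also have "s\<^sup>2 * (\<mu> * m) * (\<mu> * m) = (s * a * \<mu>)\<^sup>2 * m + (s * b * \<mu>)\<^sup>2 * m"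
    by (simp add: m_def algebra_simps power2_eq_square)
  finally show ?thesis
    using nonneg[of "s * a * \<mu>"] nonneg[of "s * b * \<mu>"] by (simp add: additive m_def)
qed

lemma mod_eq_if_annihilates_multiples:
  fixes L :: "'a::field poly \<Rightarrow> real"
  assumes additive: "\<And>p q. L (p + q) = L p + L q"
    and annihilates: "\<And>P. degree P + degree g \<le> n \<Longrightarrow> L (g * P) = 0"
    and "g \<noteq> 0" "degree p \<le> n"
  shows "L (p mod g) = L p"
proof (cases "degree g \<le> n")
  case True
  have "degree (p mod g) \<le> n"
    using degree_mod_less[OF \<open>g \<noteq> 0\<close>, of p] True by auto
  then have "degree (p - p mod g) \<le> n"
    using \<open>degree p \<le> n\<close> by (rule degree_diff_le[rotated])
  then have "degree (g * (p div g)) \<le> n"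
    by (simp only: minus_mod_eq_mult_div)
  then have "L (g * (p div g)) = 0"
  proof (cases "p div g = 0")
    case False
    then show ?thesis
      using \<open>degree (g * (p div g)) \<le> n\<close> \<open>g \<noteq> 0\<close>
      by (intro annihilates) (simp add: degree_mult_eq)
  qed (use additive[of 0 0] in simp)
  then show ?thesis
    using additive[of "g * (p div g)" "p mod g"] by simp
next
  case False
  then show ?thesis
    using \<open>degree p \<le> n\<close> by (simp add: mod_poly_less)
qed

section \<open>Second-order critical functionals\<close>

text \<open>The conditions that a vanishing gradient and a positive semidefinite Hessian of \<open>f_B\<close>
  at \<open>(u1, u2)\<close> impose on \<open>L p = (B (u1\<^sup>2 + u2\<^sup>2) - b) \<bullet> B p\<close>.\<close>

locale second_order_critical =
  fixes L :: "real poly \<Rightarrow> real" and d :: nat and u1 u2 :: "real poly"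
  assumes additive: "L (p + q) = L p + L q"
    and degree_u1: "degree u1 \<le> d" and degree_u2: "degree u2 \<le> d"
    and first_order_u1: "degree w \<le> d \<Longrightarrow> L (u1 * w) = 0"
    and first_order_u2: "degree w \<le> d \<Longrightarrow> L (u2 * w) = 0"
    and syzygy_nonneg: "\<lbrakk>degree n1 \<le> d; degree n2 \<le> d; u1 * n1 + u2 * n2 = 0\<rbrakk>
      \<Longrightarrow> 0 \<le> L (n1\<^sup>2 + n2\<^sup>2)"
    and syzygy_null: "\<lbrakk>degree n1 \<le> d; degree n2 \<le> d; u1 * n1 + u2 * n2 = 0;
      L (n1\<^sup>2 + n2\<^sup>2) = 0; degree w \<le> d\<rbrakk> \<Longrightarrow> L (n1 * w) = 0 \<and> L (n2 * w) = 0"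
begin

lemma zero [simp]: "L 0 = 0"
  using additive[of 0 0] by simp

lemma minus: "L (- p) = - L p"
  using additive[of p "- p"] by simp

lemma vanishes_at_u: "L (u1\<^sup>2 + u2\<^sup>2) = 0"
  using first_order_u1[OF degree_u1] first_order_u2[OF degree_u2]
  by (simp add: additive power2_eq_square)

end

lemma second_order_critical_if_line_conditions:
  fixes C :: "real poly \<Rightarrow> 'a::real_inner"
  assumes add: "\<And>p q. C (p + q) = C p + C q" and smult: "\<And>c p. C (smult c p) = c *\<^sub>R C p"
    and degree_u: "degree u1 \<le> d" "degree u2 \<le> d"
    and first: "\<And>v1 v2. degree v1 \<le> d \<Longrightarrow> degree v2 \<le> d \<Longrightarrow> r \<bullet> C (u1 * v1 + u2 * v2) = 0"
    and second: "\<And>v1 v2. degree v1 \<le> d \<Longrightarrow> degree v2 \<le> d \<Longrightarrow>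
      0 \<le> 2 * (C (u1 * v1 + u2 * v2) \<bullet> C (u1 * v1 + u2 * v2)) + r \<bullet> C (v1\<^sup>2 + v2\<^sup>2)"
  shows "second_order_critical (\<lambda>p. r \<bullet> C p) d u1 u2"
proof
  have C0: "C 0 = 0"
    using add[of 0 0] by simp
  show "r \<bullet> C (p + q) = r \<bullet> C p + r \<bullet> C q" for p q
    by (simp add: add inner_add_right)
  show "degree u1 \<le> d" "degree u2 \<le> d"
    by (fact degree_u)+
  show "r \<bullet> C (u1 * w) = 0" "r \<bullet> C (u2 * w) = 0" if "degree w \<le> d" for w
    using first[OF that, of 0] first[OF _ that, of 0] by simp_all
  show "0 \<le> r \<bullet> C (n1\<^sup>2 + n2\<^sup>2)" if "degree n1 \<le> d" "degree n2 \<le> d" "u1 * n1 + u2 * n2 = 0" for n1 n2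
    using second[OF that(1,2)] that(3) by (simp add: C0)
  show "r \<bullet> C (n1 * w) = 0 \<and> r \<bullet> C (n2 * w) = 0"
    if n: "degree n1 \<le> d" "degree n2 \<le> d" "u1 * n1 + u2 * n2 = 0" "r \<bullet> C (n1\<^sup>2 + n2\<^sup>2) = 0"
      and "degree w \<le> d" for n1 n2 w
  proof
    have perturbed: "degree (n + smult x w) \<le> d" if "degree n \<le> d" for n x
      using degree_add_le[OF that order.trans[OF degree_smult_le \<open>degree w \<le> d\<close>]] .
    show "r \<bullet> C (n1 * w) = 0"
    proof (rule inner_vanishes_if_perturbation_nonneg[OF add smult _ n(4)])
      fix x
      have syz: "u1 * (n1 + smult x w) + u2 * n2 = smult x (u1 * w)"
        using n(3) by (simp add: algebra_simps)
      show "0 \<le> 2 * (C (smult x (u1 * w)) \<bullet> C (smult x (u1 * w))) + r \<bullet> C ((n1 + smult x w)\<^sup>2 + n2\<^sup>2)"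
        using second[OF perturbed[OF n(1), of x] n(2)] by (simp only: syz)
    qed
    show "r \<bullet> C (n2 * w) = 0"
    proof (rule inner_vanishes_if_perturbation_nonneg[OF add smult _ n(4)[unfolded add.commute[of "n1\<^sup>2"]]])
      fix x
      have syz: "u1 * n1 + u2 * (n2 + smult x w) = smult x (u2 * w)"
        using n(3) by (simp add: algebra_simps)
      show "0 \<le> 2 * (C (smult x (u2 * w)) \<bullet> C (smult x (u2 * w))) + r \<bullet> C ((n2 + smult x w)\<^sup>2 + n1\<^sup>2)"
        using second[OF n(1) perturbed[OF n(2), of x]] by (simp only: syz add.commute[of "n1\<^sup>2"])
    qed
  qed
qed

lemma second_order_critical_pullback:
  fixes \<psi> :: "nat \<Rightarrow> real poly \<Rightarrow> real poly"
  assumes crit: "second_order_critical L d u1 u2"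
    and \<psi>_add: "\<And>n p q. \<psi> n (p + q) = \<psi> n p + \<psi> n q"
    and \<psi>_mult: "\<And>n m p q. degree p \<le> n \<Longrightarrow> degree q \<le> m \<Longrightarrow> \<psi> (n + m) (p * q) = \<psi> n p * \<psi> m q"
    and \<psi>_degree: "\<And>n p. degree p \<le> n \<Longrightarrow> degree (\<psi> n p) \<le> n"
    and v: "degree v1 \<le> d" "degree v2 \<le> d" "\<psi> d v1 = u1" "\<psi> d v2 = u2"
  shows "second_order_critical (\<lambda>p. L (\<psi> (2 * d) p)) d v1 v2"
proof -
  interpret second_order_critical L d u1 u2
    by (fact crit)
  have \<psi>_zero: "\<psi> n 0 = 0" for n
    using \<psi>_add[of n 0 0] by simp
  have \<psi>_prod: "\<psi> (2 * d) (p * q) = \<psi> d p * \<psi> d q" if "degree p \<le> d" "degree q \<le> d" for p q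
    using \<psi>_mult[OF that] by (simp add: mult_2)
  have \<psi>_syzygy: "u1 * \<psi> d n1 + u2 * \<psi> d n2 = 0"
    if "degree n1 \<le> d" "degree n2 \<le> d" "v1 * n1 + v2 * n2 = 0" for n1 n2
  proof -
    have "u1 * \<psi> d n1 + u2 * \<psi> d n2 = \<psi> (2 * d) (v1 * n1 + v2 * n2)"
      using that(1,2) v by (simp add: \<psi>_add \<psi>_prod)
    then show ?thesis
      by (simp add: that(3) \<psi>_zero)
  qed
  have \<psi>_sum_squares: "\<psi> (2 * d) (n1\<^sup>2 + n2\<^sup>2) = (\<psi> d n1)\<^sup>2 + (\<psi> d n2)\<^sup>2"
    if "degree n1 \<le> d" "degree n2 \<le> d" for n1 n2
    using that by (simp add: \<psi>_add \<psi>_prod power2_eq_square)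
  show ?thesis
  proof
    show "L (\<psi> (2 * d) (p + q)) = L (\<psi> (2 * d) p) + L (\<psi> (2 * d) q)" for p q
      by (simp add: \<psi>_add additive)
    show "degree v1 \<le> d" "degree v2 \<le> d"
      by (fact v)+
    show "L (\<psi> (2 * d) (v1 * w)) = 0" "L (\<psi> (2 * d) (v2 * w)) = 0" if "degree w \<le> d" for w
      using that v by (simp_all add: \<psi>_prod \<psi>_degree first_order_u1 first_order_u2)
    show "0 \<le> L (\<psi> (2 * d) (n1\<^sup>2 + n2\<^sup>2))"
      if "degree n1 \<le> d" "degree n2 \<le> d" "v1 * n1 + v2 * n2 = 0" for n1 n2
      using that by (simp add: \<psi>_sum_squares \<psi>_syzygy \<psi>_degree syzygy_nonneg)
    show "L (\<psi> (2 * d) (n1 * w)) = 0 \<and> L (\<psi> (2 * d) (n2 * w)) = 0"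
      if "degree n1 \<le> d" "degree n2 \<le> d" "v1 * n1 + v2 * n2 = 0"
        "L (\<psi> (2 * d) (n1\<^sup>2 + n2\<^sup>2)) = 0" "degree w \<le> d" for n1 n2 w
      using that syzygy_null[of "\<psi> d n1" "\<psi> d n2" "\<psi> d w"]
      by (simp add: \<psi>_sum_squares \<psi>_syzygy \<psi>_prod \<psi>_degree)
  qed
qed

locale second_order_critical_factored = second_order_critical +
  fixes g a b :: "real poly"
  assumes u1_eq: "u1 = g * a" and u2_eq: "u2 = g * b" and coprime: "coprime a b"
    and g_nonzero: "g \<noteq> 0" and a_nonzero: "a \<noteq> 0"
    and degree_g_a: "degree g + degree a = d" and degree_b: "degree b \<le> degree a"
begin

definition reduced :: "real poly \<Rightarrow> real" where
  "reduced p = L (p mod g)"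

lemma bounded_combination:
  "degree P \<le> d + degree a \<Longrightarrow> \<exists>X Y. degree X \<le> d \<and> degree Y \<le> d \<and> P = a * X + b * Y"
  using coprime_combination_degree_le[OF coprime a_nonzero degree_b, of d P] degree_g_a by simp

lemma annihilates_multiples_of_g:
  assumes "degree P + degree g \<le> 2 * d"
  shows "L (g * P) = 0"
proof -
  have "degree P \<le> d + degree a"
    using assms degree_g_a by simp
  then obtain X Y where "degree X \<le> d" "degree Y \<le> d" "P = a * X + b * Y"
    using bounded_combination by blast
  then have "g * P = u1 * X + u2 * Y"
    by (simp add: u1_eq u2_eq algebra_simps)
  then show ?thesis
    using first_order_u1[OF \<open>degree X \<le> d\<close>] first_order_u2[OF \<open>degree Y \<le> d\<close>]
    by (simp add: additive)
qed

lemma reduced_eq: "degree p \<le> 2 * d \<Longrightarrow> reduced p = L p"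
  unfolding reduced_def
  using additive annihilates_multiples_of_g g_nonzero by (rule mod_eq_if_annihilates_multiples)

lemma reduced_cong: "g dvd p - q \<Longrightarrow> reduced p = reduced q"
  by (simp add: reduced_def flip: mod_eq_dvd_iff)

lemma reduced_additive: "reduced (p + q) = reduced p + reduced q"
  by (simp add: reduced_def poly_mod_add_left additive)

lemma reduced_multiple_of_g: "reduced (g * z) = 0"
  by (simp add: reduced_def)

lemma degree_mod_g_le: "degree (h mod g) \<le> degree g"
  using degree_mod_less[OF g_nonzero, of h] by auto

lemma dvd_minus_mod_g: "g dvd h - h mod g"
  by (simp add: minus_mod_eq_mult_div)

lemma syzygy_of_small_multiplier:
  assumes "degree h \<le> degree g"
  shows "degree (b * h) \<le> d" "degree (- (a * h)) \<le> d" "u1 * (b * h) + u2 * (- (a * h)) = 0"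
  using degree_mult_le[of b h] degree_mult_le[of a h] assms degree_g_a degree_b
  by (auto simp: u1_eq u2_eq algebra_simps)

lemma reduced_weighted_square:
  "reduced (h\<^sup>2 * (a\<^sup>2 + b\<^sup>2)) = L ((b * (h mod g))\<^sup>2 + (- (a * (h mod g)))\<^sup>2)"
proof -
  define h' where "h' = h mod g"
  have "h\<^sup>2 * (a\<^sup>2 + b\<^sup>2) - ((b * h')\<^sup>2 + (- (a * h'))\<^sup>2) = (h - h') * ((h + h') * (a\<^sup>2 + b\<^sup>2))"
    by (simp add: power2_eq_square algebra_simps)
  then have "g dvd h\<^sup>2 * (a\<^sup>2 + b\<^sup>2) - ((b * h')\<^sup>2 + (- (a * h'))\<^sup>2)"
    using dvd_minus_mod_g[of h] by (simp add: h'_def)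
  then have "reduced (h\<^sup>2 * (a\<^sup>2 + b\<^sup>2)) = reduced ((b * h')\<^sup>2 + (- (a * h'))\<^sup>2)"
    by (rule reduced_cong)
  also have "\<dots> = L ((b * h')\<^sup>2 + (- (a * h'))\<^sup>2)"
    using syzygy_of_small_multiplier[OF degree_mod_g_le[of h]]
    by (intro reduced_eq degree_sum_squares_le) (simp_all add: h'_def)
  finally show ?thesis
    by (simp add: h'_def)
qed

lemma reduced_weighted_square_nonneg: "0 \<le> reduced (h\<^sup>2 * (a\<^sup>2 + b\<^sup>2))"
  unfolding reduced_weighted_square
  using syzygy_of_small_multiplier[OF degree_mod_g_le[of h]] by (rule syzygy_nonneg)

lemma reduced_weighted_square_null:
  assumes "reduced (h\<^sup>2 * (a\<^sup>2 + b\<^sup>2)) = 0"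
  shows "reduced (h * z) = 0"
proof -
  define h' where "h' = h mod g"
  have syz: "degree (b * h') \<le> d" "degree (- (a * h')) \<le> d" "u1 * (b * h') + u2 * (- (a * h')) = 0"
    unfolding h'_def by (fact syzygy_of_small_multiplier[OF degree_mod_g_le])+
  have null: "L (b * h' * w) = 0 \<and> L (a * h' * w) = 0" if "degree w \<le> d" for w
    using syzygy_null[OF syz _ that] assms by (simp add: reduced_weighted_square h'_def minus)
  have "degree (z mod g) \<le> d + degree a"
    using degree_mod_g_le[of z] degree_g_a by simp
  then obtain X Y where XY: "degree X \<le> d" "degree Y \<le> d" "z mod g = a * X + b * Y"
    using bounded_combination by blast
  have "h * z - h' * (z mod g) = (h - h') * z + h' * (z - z mod g)"
    by (simp add: algebra_simps)
  then have "g dvd h * z - h' * (z mod g)"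
    using dvd_minus_mod_g[of h] dvd_minus_mod_g[of z] by (simp add: h'_def)
  then have "reduced (h * z) = reduced (a * h' * X + b * h' * Y)"
    by (rule reduced_cong[THEN trans]) (simp add: XY(3) algebra_simps)
  also have "\<dots> = L (a * h' * X) + L (b * h' * Y)"
    using degree_mult_le_add[OF syz(2) XY(1)] degree_mult_le_add[OF syz(1) XY(2)]
    by (simp add: reduced_additive reduced_eq mult_2)
  finally show ?thesis
    using null[OF XY(1)] null[OF XY(2)] by simp
qed

lemma nonneg_square:
  assumes "degree s \<le> d"
  shows "0 \<le> L (s\<^sup>2)"
proof -
  have "0 \<le> reduced (s\<^sup>2)"
    using reduced_additive reduced_weighted_square_nonneg reduced_weighted_square_null
      g_nonzero reduced_multiple_of_g
    by (rule nonneg_squares_if_nonneg_weighted_squares)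
  with assms show ?thesis
    by (simp add: reduced_eq degree_square_le)
qed

end

context second_order_critical
begin

lemma nonneg_square_if_full_degree:
  assumes "degree u1 = d" "u1 \<noteq> 0" "degree s \<le> d"
  shows "0 \<le> L (s\<^sup>2)"
proof -
  define g where "g = gcd u1 u2"
  have "g \<noteq> 0"
    using \<open>u1 \<noteq> 0\<close> by (simp add: g_def)
  have u: "u1 = g * (u1 div g)" "u2 = g * (u2 div g)"
    by (simp_all add: g_def)
  then have "u1 div g \<noteq> 0"
    using \<open>u1 \<noteq> 0\<close> by auto
  then have deg: "degree g + degree (u1 div g) = d"
    using u(1) \<open>g \<noteq> 0\<close> assms(1) by (metis degree_mult_eq)
  have "degree (u2 div g) \<le> degree (u1 div g)"
  proof (cases "u2 div g = 0")
    case False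
    then show ?thesis
      using u(2) deg degree_u2 \<open>g \<noteq> 0\<close> by (metis degree_mult_eq add_le_cancel_left)
  qed simp
  moreover have "coprime (u1 div g) (u2 div g)"
    using \<open>u1 \<noteq> 0\<close> by (simp add: g_def div_gcd_coprime)
  ultimately interpret second_order_critical_factored L d u1 u2 g "u1 div g" "u2 div g"
    using u \<open>g \<noteq> 0\<close> \<open>u1 div g \<noteq> 0\<close> deg by unfold_locales
  show ?thesis
    using \<open>degree s \<le> d\<close> by (rule nonneg_square)
qed

text \<open>Dehomogenising at \<open>x\<^sub>2\<close> may lower the degree of \<open>u1\<close>; shifting a point where \<open>u1\<close> does
  not vanish to the origin and then swapping the variables makes \<open>u1\<close> of full degree \<open>d\<close>.\<close>

lemma nonneg_square:
  assumes "degree s \<le> d"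
  shows "0 \<le> L (s\<^sup>2)"
proof (cases "u1 = 0")
  case True
  then show ?thesis
    using syzygy_nonneg[OF assms, of 0] by simp
next
  case False
  then obtain c where "poly u1 c \<noteq> 0"
    using poly_all_0_iff_0 by blast
  interpret shifted: second_order_critical "\<lambda>p. L (p \<circ>\<^sub>p [:- c, 1:])" d
    "u1 \<circ>\<^sub>p [:c, 1:]" "u2 \<circ>\<^sub>p [:c, 1:]"
    by (rule second_order_critical_pullback[OF second_order_critical_axioms])
      (simp_all add: pcompose_add pcompose_mult degree_pcompose degree_u1 degree_u2 pcompose_shift_shift)
  interpret swapped: second_order_critical "\<lambda>p. L (form_swap (2 * d) p \<circ>\<^sub>p [:- c, 1:])" d
    "form_swap d (u1 \<circ>\<^sub>p [:c, 1:])" "form_swap d (u2 \<circ>\<^sub>p [:c, 1:])"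
    by (rule second_order_critical_pullback[OF shifted.second_order_critical_axioms])
      (simp_all add: form_swap_add form_swap_mult degree_form_swap_le form_swap_form_swap
        degree_pcompose degree_u1 degree_u2)
  have "coeff (form_swap d (u1 \<circ>\<^sub>p [:c, 1:])) d \<noteq> 0"
    using \<open>poly u1 c \<noteq> 0\<close> by (simp add: coeff_form_swap pcompose_coeff_0)
  then have "degree (form_swap d (u1 \<circ>\<^sub>p [:c, 1:])) = d" "form_swap d (u1 \<circ>\<^sub>p [:c, 1:]) \<noteq> 0"
    using degree_form_swap_le[of d] le_degree by (auto intro: antisym)
  then have "0 \<le> L (form_swap (2 * d) ((form_swap d (s \<circ>\<^sub>p [:c, 1:]))\<^sup>2) \<circ>\<^sub>p [:- c, 1:])"
    by (intro swapped.nonneg_square_if_full_degree degree_form_swap_le)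
  moreover have "form_swap (2 * d) ((form_swap d (s \<circ>\<^sub>p [:c, 1:]))\<^sup>2) \<circ>\<^sub>p [:- c, 1:] = s\<^sup>2"
    using assms by (simp add: form_swap_square degree_pcompose)
      (simp add: power2_eq_square pcompose_mult pcompose_shift_shift)
  ultimately show ?thesis
    by simp
qed

lemma nonneg_sos: "p \<in> sos_forms d \<Longrightarrow> 0 \<le> L p"
proof -
  assume "p \<in> sos_forms d"
  then obtain qs where "set qs \<subseteq> binary_forms d" "p = sum_list (map (\<lambda>q. q\<^sup>2) qs)"
    by (auto simp: sos_forms_def)
  then show ?thesis
    by (induction qs arbitrary: p) (auto simp: additive binary_forms_def intro!: add_nonneg_nonneg nonneg_square)
qed

end

theorem corollary6p3:
  fixes d :: nat and B :: "real poly \<Rightarrow> 'a::euclidean_space" and b :: 'a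
    and u :: "real poly \<times> real poly"
  assumes lin: "linear_on_forms (2 * d) B"
    and feas: "\<exists>p\<in>sos_forms d. B p = b"
    and u_in: "fst u \<in> binary_forms d" "snd u \<in> binary_forms d"
    and grad: "\<forall>v. fst v \<in> binary_forms d \<and> snd v \<in> binary_forms d \<longrightarrow>
                 ((\<lambda>t. f_B B b (line_pt u v t)) has_real_derivative 0) (at 0)"
    and hess: "\<forall>v. fst v \<in> binary_forms d \<and> snd v \<in> binary_forms d \<longrightarrow>
                 deriv (deriv (\<lambda>t. f_B B b (line_pt u v t))) 0 \<ge> 0"
  shows "f_B B b u = 0"
proof -
  obtain u1 u2 where u: "u = (u1, u2)"
    by fastforce
  have du: "degree u1 \<le> d" "degree u2 \<le> d"
    using u_in by (simp_all add: u binary_forms_def)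
  obtain p where p: "p \<in> sos_forms d" "B p = b"
    using feas by blast
  define r where "r = B (u1\<^sup>2 + u2\<^sup>2) - b"
  define C where "C = extend_form_map (2 * d) B"
  have line: "r \<bullet> C (u1 * v1 + u2 * v2) = 0 \<and>
      0 \<le> 2 * (C (u1 * v1 + u2 * v2) \<bullet> C (u1 * v1 + u2 * v2)) + r \<bullet> C (v1\<^sup>2 + v2\<^sup>2)"
    if dv: "degree v1 \<le> d" "degree v2 \<le> d" for v1 v2
  proof -
    have v: "fst (v1, v2) \<in> binary_forms d \<and> snd (v1, v2) \<in> binary_forms d"
      using dv by (simp add: binary_forms_def)
    have "degree (u1 * v1 + u2 * v2) \<le> 2 * d"
      using du dv unfolding mult_2 by (intro degree_add_le degree_mult_le_add)
    moreover have "r \<bullet> (2 *\<^sub>R B (u1 * v1 + u2 * v2)) = 0"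
      "0 \<le> (2 *\<^sub>R B (u1 * v1 + u2 * v2)) \<bullet> (2 *\<^sub>R B (u1 * v1 + u2 * v2)) + 2 * (r \<bullet> B (v1\<^sup>2 + v2\<^sup>2))"
      using quadratic_curve_critical_conditions grad[rule_format, OF v] hess[rule_format, OF v]
      unfolding u f_B_line_pt[OF lin du dv] r_def by blast+
    ultimately show ?thesis
      using dv by (simp add: C_def extend_form_map_eq degree_sum_squares_le)
  qed
  interpret second_order_critical "\<lambda>p. r \<bullet> C p" d u1 u2
    using extend_form_map_add[OF lin] extend_form_map_smult[OF lin] du line
    unfolding C_def by (intro second_order_critical_if_line_conditions) auto
  have "degree p \<le> 2 * d"
    using sos_forms_subset_binary_forms p(1) by (auto simp: binary_forms_def)
  then have "r \<bullet> r = r \<bullet> C (u1\<^sup>2 + u2\<^sup>2) - r \<bullet> C p"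
    using p(2) du by (simp add: C_def r_def extend_form_map_eq degree_sum_squares_le inner_diff_right)
  also have "\<dots> \<le> 0"
    using vanishes_at_u nonneg_sos[OF p(1)] by simp
  finally have "r \<bullet> r \<le> 0" .
  moreover have "f_B B b u = r \<bullet> r"
    by (simp add: f_B_def u r_def power2_norm_eq_inner)
  ultimately show ?thesis
    using inner_ge_zero[of r] by linarith
qed

end
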